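(* Let $\Pi=\Pi_1\times\cdots\times\Pi_T$ be a class of dynamic treatment regimes. For any integers $s,t$ with $1\le s\le t\le T$ and any $\epsilon>0$, $$N_{d_h}\big((t-s+1)\epsilon,\Pi_{s:t}\big)\le\prod_{\ell=s}^tN_{d_h}(\epsilon,\Pi_\ell).$$
   Context: For each stage $t$, $\mathcal{H}_t$ is a history space with elements $h_t=(\underline a_{t-1},\underline s_t)$; for $\ell\le t$ the sub-history is $h_\ell=(\underline a_{\ell-1},\underline s_\ell)\in\mathcal{H}_\ell$. $\Pi_t$ is a class of measurable maps $\pi_t:\mathcal{H}_t\to\mathcal{A}_t$ (finite action set), $\Pi_{s:t}=\Pi_s\times\cdots\times\Pi_t$ with elements $\pi_{s:t}=(\pi_s,\dots,\pi_t)$. Given points $h_t^{(1)},\dots,h_t^{(n)}\in\mathcal{H}_t$, the Hamming distance is $d_h(\pi_{s:t},\pi'_{s:t})=n^{-1}\sum_{i=1}^n\mathbf{1}\{\pi_s(h_s^{(i)})\ne\pi'_s(h_s^{(i)})\vee\cdots\vee\pi_t(h_t^{(i)})\ne\pi'_t(h_t^{(i)})\}$; $N_{d_h}(\epsilon,\Pi_{s:t},\{h_t^{(i)}\})$ is the smallest number of elements $\pi^{(1)}_{s:t},\pi^{(2)}_{s:t},\dots$ of $\Pi_{s:t}$ such that every $\pi_{s:t}\in\Pi_{s:t}$ has some $\pi^{(j)}_{s:t}$ with $d_h(\pi_{s:t},\pi^{(j)}_{s:t})\le\epsilon$; the $\epsilon$-Hamming covering number $N_{d_h}(\epsilon,\Pi_{s:t})$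 is its supremum over all $n\ge1$ and $h_t^{(1)},\dots,h_t^{(n)}\in\mathcal{H}_t$; $N_{d_h}(\epsilon,\Pi_{t:t})=N_{d_h}(\epsilon,\Pi_t)$. *)

theory Defs
  imports Main "HOL-Library.Extended_Nat" "HOL-Library.FuncSet"
begin

text \<open>A stage-t history h_t = (a_1..a_{t-1}, s_1..s_t) is a pair of lists
  (actions, states); stages are 1-based. A_l is the action set and S_l the
  state set at stage l.\<close>

type_synonym ('a,'s) hist = "'a list \<times> 's list"

definition hist_space :: "(nat \<Rightarrow> 'a set) \<Rightarrow> (nat \<Rightarrow> 's set) \<Rightarrow> nat \<Rightarrow> ('a,'s) hist set" where
  "hist_space A S t = {(as, ss). length as = t - 1 \<and> length ss = t \<and>
      (\<forall>i < t - 1. as ! i \<in> A (Suc i)) \<and> (\<forall>i < t. ss ! i \<in> S (Suc i))}"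

definition subhist :: "nat \<Rightarrow> ('a,'s) hist \<Rightarrow> ('a,'s) hist" where
  "subhist l h = (take (l - 1) (fst h), take l (snd h))"

definition policy_product :: "(nat \<Rightarrow> (('a,'s) hist \<Rightarrow> 'a) set) \<Rightarrow> nat \<Rightarrow> nat
    \<Rightarrow> (nat \<Rightarrow> ('a,'s) hist \<Rightarrow> 'a) set" where
  "policy_product Pol s t = Pi\<^sub>E {s..t} Pol"

definition hamming_dist :: "nat \<Rightarrow> nat \<Rightarrow> nat \<Rightarrow> (nat \<Rightarrow> ('a,'s) hist)
    \<Rightarrow> (nat \<Rightarrow> ('a,'s) hist \<Rightarrow> 'a) \<Rightarrow> (nat \<Rightarrow> ('a,'s) hist \<Rightarrow> 'a) \<Rightarrow> real" where
  "hamming_dist s t n h p q =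
     real (card {i. i < n \<and> (\<exists>l\<in>{s..t}. p l (subhist l (h i)) \<noteq> q l (subhist l (h i)))}) / real n"

text \<open>Covering number of a class P of tuples on {s..t} w.r.t. given points;
  infinite if no finite cover exists.\<close>
definition cover_num_pts :: "real \<Rightarrow> (nat \<Rightarrow> ('a,'s) hist \<Rightarrow> 'a) set \<Rightarrow> nat \<Rightarrow> nat
    \<Rightarrow> nat \<Rightarrow> (nat \<Rightarrow> ('a,'s) hist) \<Rightarrow> enat" where
  "cover_num_pts eps P s t n h =
     Inf {enat (card C) | C. finite C \<and> C \<subseteq> P \<and>
            (\<forall>p\<in>P. \<exists>q\<in>C. hamming_dist s t n h p q \<le> eps)}"

definition hamming_cover_num :: "(nat \<Rightarrow> 'a set) \<Rightarrow> (nat \<Rightarrow> 's set) \<Rightarrow> real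
    \<Rightarrow> (nat \<Rightarrow> (('a,'s) hist \<Rightarrow> 'a) set) \<Rightarrow> nat \<Rightarrow> nat \<Rightarrow> enat" where
  "hamming_cover_num A S eps Pol s t =
     Sup {cover_num_pts eps (policy_product Pol s t) s t n h | n h.
            n \<ge> 1 \<and> (\<forall>i<n. h i \<in> hist_space A S t)}"

end

theory Submission
  imports Defs
begin

(* Fix n points h^(i) of H_t.  Choose, for every stage l, a minimal eps-cover C_l of Pi_l with
   respect to the sub-histories h_l^(i), and combine one element of each C_l into a policy tuple.
   Two tuples differ at a point only if they differ at some stage, so the Hamming distance on
   {s..t} is at most the sum of the stage-wise distances, i.e. at most (t - s + 1) eps.  The
   combined tuples thus form a cover with at most prod_l |C_l| elements; taking suprema over
   the points gives the bound, since sub-histories of points of H_t are points of H_l.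
   The argument works for each fixed configuration of points. *)

lemma enat_prod_mono:
  "(\<And>i. i \<in> A \<Longrightarrow> f i \<le> g i) \<Longrightarrow> prod f A \<le> prod (g :: _ \<Rightarrow> enat) A"
  by (induct A rule: infinite_finite_induct) (auto intro!: mult_mono)

lemma enat_prod_nonzero:
  "finite A \<Longrightarrow> (\<And>a. a \<in> A \<Longrightarrow> f a \<noteq> 0) \<Longrightarrow> prod (f :: _ \<Rightarrow> enat) A \<noteq> 0"
  by (induct rule: finite_induct) (auto simp: imult_is_0)

lemma enat_prod_eq_infinity:
  assumes "finite A" "l \<in> A" "f l = \<infinity>" "\<And>a. a \<in> A \<Longrightarrow> f a \<noteq> 0"
  shows "prod (f :: _ \<Rightarrow> enat) A = \<infinity>"
proof -
  have "prod f A = f l * prod f (A - {l})"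
    using assms by (simp add: prod.remove)
  moreover have "prod f (A - {l}) \<noteq> 0"
    using assms by (intro enat_prod_nonzero) auto
  ultimately show ?thesis
    using assms by (simp add: imult_is_infinity)
qed

lemma subhist_subhist [simp]: "subhist l (subhist l h) = subhist l h"
  by (simp add: subhist_def)

lemma subhist_in_hist_space:
  "h \<in> hist_space A S t \<Longrightarrow> l \<le> t \<Longrightarrow> subhist l h \<in> hist_space A S l"
  by (auto simp: hist_space_def subhist_def)

lemma hamming_dist_cong:
  "(\<And>l. l \<in> {s..t} \<Longrightarrow> p l = p' l \<and> q l = q' l) \<Longrightarrow>
    hamming_dist s t n h p q = hamming_dist s t n h p' q'"
  unfolding hamming_dist_def by (intro arg_cong[where f = "\<lambda>X. real (card X) / real n"]) auto

lemma hamming_dist_le_sum_stages: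
  "hamming_dist s t n h p q \<le> (\<Sum>l\<in>{s..t}. hamming_dist l l n (\<lambda>i. subhist l (h i)) p q)"
proof -
  define B where "B l = {i. i < n \<and> p l (subhist l (h i)) \<noteq> q l (subhist l (h i))}" for l
  have "{i. i < n \<and> (\<exists>l\<in>{s..t}. p l (subhist l (h i)) \<noteq> q l (subhist l (h i)))}
      = (\<Union>l\<in>{s..t}. B l)"
    by (auto simp: B_def)
  then have "hamming_dist s t n h p q = real (card (\<Union>l\<in>{s..t}. B l)) / real n"
    by (simp add: hamming_dist_def)
  also have "\<dots> \<le> real (\<Sum>l\<in>{s..t}. card (B l)) / real n"
    by (intro divide_right_mono of_nat_mono card_UN_le) auto
  also have "\<dots> = (\<Sum>l\<in>{s..t}. hamming_dist l l n (\<lambda>i. subhist l (h i)) p q)"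
    by (simp add: hamming_dist_def B_def sum_divide_distrib)
  finally show ?thesis .
qed

lemma hamming_dist_combine_le:
  assumes "\<And>l. l \<in> {s..t} \<Longrightarrow> hamming_dist l l n (\<lambda>i. subhist l (h i)) p (g l) \<le> eps"
  shows "hamming_dist s t n h p (\<lambda>l\<in>{s..t}. g l l) \<le> real (card {s..t}) * eps"
proof -
  have "hamming_dist s t n h p (\<lambda>l\<in>{s..t}. g l l)
      \<le> (\<Sum>l\<in>{s..t}. hamming_dist l l n (\<lambda>i. subhist l (h i)) p (\<lambda>l\<in>{s..t}. g l l))"
    by (rule hamming_dist_le_sum_stages)
  also have "\<dots> = (\<Sum>l\<in>{s..t}. hamming_dist l l n (\<lambda>i. subhist l (h i)) p (g l))"
    by (intro sum.cong refl hamming_dist_cong) auto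
  also have "\<dots> \<le> (\<Sum>l\<in>{s..t}. eps)"
    using assms by (intro sum_mono)
  finally show ?thesis
    by simp
qed

definition is_hamming_cover :: "real \<Rightarrow> (nat \<Rightarrow> ('a,'s) hist \<Rightarrow> 'a) set \<Rightarrow> nat \<Rightarrow> nat \<Rightarrow> nat
    \<Rightarrow> (nat \<Rightarrow> ('a,'s) hist) \<Rightarrow> (nat \<Rightarrow> ('a,'s) hist \<Rightarrow> 'a) set \<Rightarrow> bool" where
  "is_hamming_cover eps P s t n h C \<longleftrightarrow>
     finite C \<and> C \<subseteq> P \<and> (\<forall>p\<in>P. \<exists>q\<in>C. hamming_dist s t n h p q \<le> eps)"

lemma cover_num_pts_eq_Inf:
  "cover_num_pts eps P s t n h = Inf {enat (card C) | C. is_hamming_cover eps P s t n h C}"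
  by (simp add: cover_num_pts_def is_hamming_cover_def)

lemma cover_num_pts_le_card:
  "is_hamming_cover eps P s t n h C \<Longrightarrow> cover_num_pts eps P s t n h \<le> enat (card C)"
  unfolding cover_num_pts_eq_Inf by (intro Inf_lower) blast

lemma cover_num_pts_attained:
  assumes "cover_num_pts eps P s t n h \<noteq> \<infinity>"
  obtains C where "is_hamming_cover eps P s t n h C" "cover_num_pts eps P s t n h = enat (card C)"
proof -
  define X where "X = {enat (card C) | C. is_hamming_cover eps P s t n h C}"
  have "X \<noteq> {}"
    using assms unfolding cover_num_pts_eq_Inf X_def[symmetric] by (auto simp: top_enat_def)
  then have "Inf X \<in> X"
    unfolding Inf_enat_def by (auto intro: LeastI)
  then show thesis
    using that by (auto simp: cover_num_pts_eq_Inf X_def)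
qed

lemma cover_num_pts_empty: "cover_num_pts eps {} s t n h = 0"
  using cover_num_pts_le_card[of eps "{}" s t n h "{}"]
  by (simp add: is_hamming_cover_def flip: zero_enat_def)

lemma cover_num_pts_nonzero:
  assumes "P \<noteq> {}"
  shows "cover_num_pts eps P s t n h \<noteq> 0"
proof
  assume zero: "cover_num_pts eps P s t n h = 0"
  then have "cover_num_pts eps P s t n h \<noteq> \<infinity>"
    by simp
  then obtain C where "is_hamming_cover eps P s t n h C" "enat (card C) = 0"
    using zero by (metis cover_num_pts_attained)
  then show False
    using assms by (auto simp: is_hamming_cover_def zero_enat_def)
qed

lemma hamming_cover_stage_close:
  assumes cover: "is_hamming_cover eps (policy_product Pol l l) l l n h C"
    and p: "p \<in> policy_product Pol s t" and l: "l \<in> {s..t}"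
  obtains g where "g \<in> C" "hamming_dist l l n h p g \<le> eps"
proof -
  have "restrict p {l} \<in> policy_product Pol l l"
    using p l by (auto simp: policy_product_def)
  then obtain g where "g \<in> C" "hamming_dist l l n h (restrict p {l}) g \<le> eps"
    using cover by (auto simp: is_hamming_cover_def)
  moreover have "hamming_dist l l n h (restrict p {l}) g = hamming_dist l l n h p g"
    by (intro hamming_dist_cong) simp
  ultimately show thesis
    using that by simp
qed

lemma hamming_cover_policy_product:
  assumes covers: "\<And>l. l \<in> {s..t} \<Longrightarrow>
      is_hamming_cover eps (policy_product Pol l l) l l n (\<lambda>i. subhist l (h i)) (C l)"
  obtains D where "is_hamming_cover (real (card {s..t}) * eps) (policy_product Pol s t) s t n h D"
    and "card D \<le> (\<Prod>l\<in>{s..t}. card (C l))"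
proof
  \<comment> \<open>f l \<in> C l is a tuple indexed by {l}; its only component is f l l\<close>
  define D where "D = (\<lambda>f. \<lambda>l\<in>{s..t}. f l l) ` Pi\<^sub>E {s..t} C"
  have finite_C: "finite (C l)" if "l \<in> {s..t}" for l
    using covers[OF that] by (simp add: is_hamming_cover_def)
  have C_stage: "q l \<in> Pol l" if "l \<in> {s..t}" "q \<in> C l" for l q
    using covers[OF that(1)] that(2) by (auto simp: is_hamming_cover_def policy_product_def)
  have "card D \<le> card (Pi\<^sub>E {s..t} C)"
    unfolding D_def using finite_C by (intro card_image_le finite_PiE) auto
  then show "card D \<le> (\<Prod>l\<in>{s..t}. card (C l))"
    by (simp add: card_PiE)
  have "D \<subseteq> policy_product Pol s t"
  proof
    fix q assume "q \<in> D"
    then obtain f where "f \<in> Pi\<^sub>E {s..t} C" "q = (\<lambda>l\<in>{s..t}. f l l)"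
      by (auto simp: D_def)
    then show "q \<in> policy_product Pol s t"
      by (auto simp: policy_product_def PiE_iff C_stage)
  qed
  moreover have "\<exists>q\<in>D. hamming_dist s t n h p q \<le> real (card {s..t}) * eps"
    if p: "p \<in> policy_product Pol s t" for p
  proof -
    have "\<exists>g\<in>C l. hamming_dist l l n (\<lambda>i. subhist l (h i)) p g \<le> eps" if "l \<in> {s..t}" for l
      using hamming_cover_stage_close[OF covers[OF that] p that] by blast
    then obtain g where g: "\<forall>l\<in>{s..t}. g l \<in> C l \<and>
        hamming_dist l l n (\<lambda>i. subhist l (h i)) p (g l) \<le> eps"
      by metis
    define q where "q = (\<lambda>l\<in>{s..t}. g l l)"
    have "q \<in> D"
      unfolding D_def q_def using g by (intro image_eqI[of _ _ "restrict g {s..t}"]) auto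
    moreover have "hamming_dist s t n h p q \<le> real (card {s..t}) * eps"
      unfolding q_def using g by (intro hamming_dist_combine_le) blast
    ultimately show ?thesis by blast
  qed
  moreover have "finite D"
    unfolding D_def using finite_C by (intro finite_imageI finite_PiE) auto
  ultimately show "is_hamming_cover (real (card {s..t}) * eps) (policy_product Pol s t) s t n h D"
    by (simp add: is_hamming_cover_def)
qed

lemma cover_num_pts_policy_product_le:
  fixes Pol :: "nat \<Rightarrow> (('a,'s) hist \<Rightarrow> 'a) set" and eps :: real
    and n :: nat and h :: "nat \<Rightarrow> ('a,'s) hist"
  defines "N l \<equiv> cover_num_pts eps (policy_product Pol l l) l l n (\<lambda>i. subhist l (h i))"
  shows "cover_num_pts (real (card {s..t}) * eps) (policy_product Pol s t) s t n h
           \<le> (\<Prod>l\<in>{s..t}. N l)"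
proof -
  \<comment> \<open>0 * \<infinity> = 0 in enat, so empty stages are treated before stages without finite cover\<close>
  consider (empty_stage) "\<exists>l\<in>{s..t}. Pol l = {}"
    | (infinite_stage) "\<forall>l\<in>{s..t}. Pol l \<noteq> {}" "\<exists>l\<in>{s..t}. N l = \<infinity>"
    | (finite_stages) "\<forall>l\<in>{s..t}. N l \<noteq> \<infinity>"
    by (cases "\<exists>l\<in>{s..t}. Pol l = {}"; cases "\<exists>l\<in>{s..t}. N l = \<infinity>") auto
  then show ?thesis
  proof cases
    case empty_stage
    then have "policy_product Pol s t = {}"
      by (auto simp: policy_product_def PiE_eq_empty_iff)
    then show ?thesis
      by (simp add: cover_num_pts_empty)
  next
    case infinite_stage
    have "N l \<noteq> 0" if "l \<in> {s..t}" for l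
      using infinite_stage(1) that
      by (auto simp: N_def policy_product_def PiE_eq_empty_iff intro!: cover_num_pts_nonzero)
    moreover obtain l where "l \<in> {s..t}" "N l = \<infinity>"
      using infinite_stage(2) by blast
    ultimately have "(\<Prod>l\<in>{s..t}. N l) = \<infinity>"
      by (intro enat_prod_eq_infinity) auto
    then show ?thesis by simp
  next
    case finite_stages
    have "\<exists>C. is_hamming_cover eps (policy_product Pol l l) l l n (\<lambda>i. subhist l (h i)) C
        \<and> N l = enat (card C)" if "l \<in> {s..t}" for l
      using finite_stages that cover_num_pts_attained unfolding N_def by blast
    then obtain C where C: "\<And>l. l \<in> {s..t} \<Longrightarrow>
        is_hamming_cover eps (policy_product Pol l l) l l n (\<lambda>i. subhist l (h i)) (C l)
        \<and> N l = enat (card (C l))"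
      by metis
    obtain D where D: "is_hamming_cover (real (card {s..t}) * eps) (policy_product Pol s t) s t n h D"
      and card_D: "card D \<le> (\<Prod>l\<in>{s..t}. card (C l))"
      using hamming_cover_policy_product C by blast
    have "cover_num_pts (real (card {s..t}) * eps) (policy_product Pol s t) s t n h \<le> enat (card D)"
      using D by (rule cover_num_pts_le_card)
    also have "\<dots> \<le> (\<Prod>l\<in>{s..t}. enat (card (C l)))"
      using card_D by (simp add: of_nat_eq_enat[symmetric] flip: of_nat_prod)
    also have "\<dots> = (\<Prod>l\<in>{s..t}. N l)"
      using C by simp
    finally show ?thesis .
  qed
qed

lemma cover_num_pts_le_hamming_cover_num:
  "n \<ge> 1 \<Longrightarrow> (\<forall>i<n. h i \<in> hist_space A S t) \<Longrightarrow>
    cover_num_pts eps (policy_product Pol s t) s t n h \<le> hamming_cover_num A S eps Pol s t"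
  unfolding hamming_cover_num_def by (rule Sup_upper) blast

lemma hamming_cover_num_le:
  "(\<And>n h. n \<ge> 1 \<Longrightarrow> \<forall>i<n. h i \<in> hist_space A S t \<Longrightarrow>
      cover_num_pts eps (policy_product Pol s t) s t n h \<le> B) \<Longrightarrow>
    hamming_cover_num A S eps Pol s t \<le> B"
  unfolding hamming_cover_num_def by (rule Sup_least) blast

theorem lemma6:
  fixes A :: "nat \<Rightarrow> 'a set" and S :: "nat \<Rightarrow> 's set"
    and Pol :: "nat \<Rightarrow> (('a,'s) hist \<Rightarrow> 'a) set"
    and T s t :: nat and eps :: real
  assumes "\<And>l. l \<in> {1..T} \<Longrightarrow> finite (A l)"
    and "\<And>l. l \<in> {1..T} \<Longrightarrow> Pol l \<subseteq> {p. \<forall>h\<in>hist_space A S l. p h \<in> A l}"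
    and "1 \<le> s" and "s \<le> t" and "t \<le> T"
    and "eps > 0"
  shows "hamming_cover_num A S (real (t - s + 1) * eps) Pol s t
           \<le> (\<Prod>l\<in>{s..t}. hamming_cover_num A S eps Pol l l)"
proof (rule hamming_cover_num_le)
  fix n :: nat and h
  assume n: "n \<ge> 1" and h: "\<forall>i<n. h i \<in> hist_space A S t"
  have card: "t - s + 1 = card {s..t}"
    using \<open>s \<le> t\<close> by simp
  have "cover_num_pts (real (t - s + 1) * eps) (policy_product Pol s t) s t n h
      \<le> (\<Prod>l\<in>{s..t}. cover_num_pts eps (policy_product Pol l l) l l n (\<lambda>i. subhist l (h i)))"
    unfolding card by (rule cover_num_pts_policy_product_le)
  also have "\<dots> \<le> (\<Prod>l\<in>{s..t}. hamming_cover_num A S eps Pol l l)"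
  proof (rule enat_prod_mono, rule cover_num_pts_le_hamming_cover_num[OF n])
    fix l assume "l \<in> {s..t}"
    then show "\<forall>i<n. subhist l (h i) \<in> hist_space A S l"
      using h by (auto intro: subhist_in_hist_space)
  qed
  finally show "cover_num_pts (real (t - s + 1) * eps) (policy_product Pol s t) s t n h
      \<le> (\<Prod>l\<in>{s..t}. hamming_cover_num A S eps Pol l l)" .
qed

end
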